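(* Let $(p,q)\in(\mathcal{H}\times\mathcal{H})\setminus\Delta$. Then, for any horizontal vectors $v\in H_p$ and $v'\in H_q$, we have \begin{equation} |\Omega_{\mathcal{H}}(v,v')|=2\cdot\frac{|v|\,|v'|}{d_{\mathcal{H}}(p,q)^2}. \end{equation} Moreover, if $K$ is a Legendrian knot passing through $p$, $q$ and $v$ and $v'$ are tangent to $K$, then the absolute value of the argument of $\Omega_{\mathcal{H}}(v,v')$ equals $\theta_K(p,q)$.
   Context: $\mathcal{H}=\mathbb{C}\times\mathbb{R}$ is the 3-dimensional Heisenberg group with coordinates $(z,u)=(x,y,u)$, group law $(z,u)\cdot(z',u')=(z+z',u+u'-\tfrac{1}{2}\Im(z\overline{z'}))$, horizontal distribution $H$ spanned by $X=\partial_x-\tfrac12 y\,\partial_u$, $Y=\partial_y+\tfrac12 x\,\partial_u$ (orthonormal, norm $|\cdot|$). The Korányi distance is $d_{\mathcal{H}}(p,q)=\|p^{-1}q\|_{\mathcal{H}}$, $\|(x,y,u)\|_{\mathcal{H}}=\sqrt[4]{(x^2+y^2)^2+16u^2}$; $\Delta$ is the diagonal. For $p=(z,u)$ let $A(p)=|z|^2-4iu$, and $\rho(p,q)=A(p^{-1}q)$. The complex 2-form on $(\mathcal{H}\times\mathcal{H})\setminus\Delta$ is $\Omega_{\mathcal{H}}=d_pd_q\log\rho$ (exterior derivatives in the first and second factors). For a Legendrian knot $K$ (smooth embedded closed Legendrian curve) and distinct $p,q\in K$, $\Gamma_K(p,q)$ is the unique $\mathbb{R}$-circle (boundary of a totally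 geodesic totally real surface in the complex hyperbolic ball, with $\partial B^2_{\mathbb{C}}\cong\mathcal{H}\cup\{\infty\}$) through $p$ and $q$ tangent to $K$ at $p$, and $\theta_K(p,q)\in[0,\pi]$ is the angle between $\Gamma_K(p,q)$ and $\Gamma_K(q,p)$, with orientations induced by an orientation of $K$. *)

theory Defs
  imports "HOL-Analysis.Analysis"
begin

text \<open>Points of the Heisenberg group H = C x R, coordinates (z,u); tangent vectors at a point
  are written in the same coordinates (dz, du).\<close>

type_synonym heis = "complex \<times> real"

definition hmult :: "heis \<Rightarrow> heis \<Rightarrow> heis" where
  "hmult p q = (fst p + fst q, snd p + snd q - Im (fst p * cnj (fst q)) / 2)"

definition hinv :: "heis \<Rightarrow> heis" where
  "hinv p = (- fst p, - snd p)"

definition kor_norm :: "heis \<Rightarrow> real" where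
  "kor_norm p = root 4 (((cmod (fst p))\<^sup>2)\<^sup>2 + 16 * (snd p)\<^sup>2)"

definition kor_dist :: "heis \<Rightarrow> heis \<Rightarrow> real" where
  "kor_dist p q = kor_norm (hmult (hinv p) q)"

definition Aof :: "heis \<Rightarrow> complex" where
  "Aof p = complex_of_real ((cmod (fst p))\<^sup>2) - 4 * \<i> * complex_of_real (snd p)"

definition rho :: "heis \<Rightarrow> heis \<Rightarrow> complex" where
  "rho p q = Aof (hmult (hinv p) q)"

definition Xvec :: "heis \<Rightarrow> heis" where
  "Xvec p = (1, - Im (fst p) / 2)"

definition Yvec :: "heis \<Rightarrow> heis" where
  "Yvec p = (\<i>, Re (fst p) / 2)"

definition horiz :: "heis \<Rightarrow> heis set" where
  "horiz p = {a *\<^sub>R Xvec p + b *\<^sub>R Yvec p | a b. True}"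

text \<open>Norm |.| on horizontal vectors (X, Y orthonormal): for v = aX + bY, |v| = sqrt(a^2+b^2),
  which is the modulus of the dz-component of v.\<close>

definition hnorm :: "heis \<Rightarrow> real" where
  "hnorm v = cmod (fst v)"

definition hinner :: "heis \<Rightarrow> heis \<Rightarrow> real" where
  "hinner v w = Re (fst v * cnj (fst w))"

definition hangle :: "heis \<Rightarrow> heis \<Rightarrow> real" where
  "hangle v w = arccos (hinner v w / (hnorm v * hnorm w))"

text \<open>Omega = d_p d_q log rho evaluated on v in T_p H and v' in T_q H, i.e. the mixed second
  directional derivative of log rho (log rho is smooth off the diagonal since Re rho >= 0, rho ~= 0,
  so the principal branch Ln is holomorphic on the range of rho).\<close>

definition Omega :: "heis \<Rightarrow> heis \<Rightarrow> heis \<Rightarrow> heis \<Rightarrow> complex" where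
  "Omega p q v v' =
     vector_derivative
       (\<lambda>s. vector_derivative (\<lambda>t. Ln (rho (p + s *\<^sub>R v) (q + t *\<^sub>R v'))) (at 0)) (at 0)"

text \<open>Smooth (C-infinity) curves, and Legendrian knots as L-periodic smooth regular curves,
  injective on a period, with horizontal tangent vectors; the orientation of the knot is that of
  the parametrisation.\<close>

definition smooth_curve :: "(real \<Rightarrow> heis) \<Rightarrow> bool" where
  "smooth_curve \<kappa> \<longleftrightarrow> (\<exists>D :: nat \<Rightarrow> real \<Rightarrow> heis. D 0 = \<kappa> \<and>
      (\<forall>k t. (D k has_vector_derivative D (Suc k) t) (at t)))"

definition legendrian_knot :: "(real \<Rightarrow> heis) \<Rightarrow> real \<Rightarrow> bool" where
  "legendrian_knot \<kappa> L \<longleftrightarrow> smooth_curve \<kappa> \<and> L > 0 \<and> (\<forall>t. \<kappa> (t + L) = \<kappa> t) \<and>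
      inj_on \<kappa> {0..<L} \<and>
      (\<forall>t. vector_derivative \<kappa> (at t) \<noteq> 0 \<and> vector_derivative \<kappa> (at t) \<in> horiz (\<kappa> t))"

text \<open>Complex hyperbolic plane, projective (Siegel) model: the Hermitian form
  <Z,W> = Z1 conj W3 + Z2 conj W2 + Z3 conj W1 of signature (2,1) on C^3. The boundary point
  (z,u) of H corresponds to the null line through (-|z|^2/2 - 2iu, z, 1) = (-A(z,u)/2, z, 1)
  (this is compatible with the group law above: left translations act by elements of U(2,1)),
  and infinity to the line through (1,0,0).\<close>

definition herm :: "complex^3 \<Rightarrow> complex^3 \<Rightarrow> complex" where
  "herm Z W = Z$1 * cnj (W$3) + Z$2 * cnj (W$2) + Z$3 * cnj (W$1)"

definition unitary21 :: "complex^3^3 \<Rightarrow> bool" where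
  "unitary21 M \<longleftrightarrow> (\<forall>Z W. herm (M *v Z) (M *v W) = herm Z W)"

definition from_lift :: "complex^3 \<Rightarrow> heis" where
  "from_lift Z = (Z$2 / Z$3, - Im (Z$1 / Z$3) / 2)"

text \<open>The standard totally real totally geodesic plane is the projectivisation of R^3 (on which the
  form is real of signature (2,1)); its boundary, the standard R-circle, is parametrised by the real
  null vectors c(t), t in [0,2pi) (c(pi) = infinity). Every R-circle is the image of it under
  some M in U(2,1); rcirc M is the corresponding oriented parametrisation (valid where the third
  homogeneous coordinate is non-zero, i.e. away from infinity).\<close>

definition stdc :: "real \<Rightarrow> complex^3" where
  "stdc t = vector [complex_of_real (- (1 - cos t) / 2), complex_of_real (sin t),
                    complex_of_real (1 + cos t)]"

definition finite_at :: "complex^3^3 \<Rightarrow> real \<Rightarrow> bool" where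
  "finite_at M t \<longleftrightarrow> (M *v stdc t)$3 \<noteq> 0"

definition rcirc :: "complex^3^3 \<Rightarrow> real \<Rightarrow> heis" where
  "rcirc M t = from_lift (M *v stdc t)"

definition is_Gamma ::
  "(real \<Rightarrow> heis) \<Rightarrow> real \<Rightarrow> heis \<Rightarrow> complex^3^3 \<Rightarrow> real \<Rightarrow> real \<Rightarrow> heis \<Rightarrow> bool" where
  "is_Gamma \<kappa> s q M t0 t1 w0 \<longleftrightarrow> unitary21 M \<and> finite_at M t0 \<and> finite_at M t1 \<and>
     rcirc M t0 = \<kappa> s \<and> rcirc M t1 = q \<and>
     (rcirc M has_vector_derivative w0) (at t0) \<and>
     (\<exists>c>0. w0 = c *\<^sub>R vector_derivative \<kappa> (at s))"

end

theory Submission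
  imports Defs
begin

text \<open>
  For horizontal \<open>v, v'\<close> with dz-components \<open>\<alpha>, \<alpha>'\<close>,
  \<open>\<rho>(p + s v, q + t v')\<close> is a quadratic polynomial in \<open>(s, t)\<close>,
  and the mixed derivative of its logarithm is
  \<open>\<Omega>(v, v') = 2 \<alpha> conj \<alpha>' conj \<rho> / \<rho>\<^sup>2\<close>;
  since \<open>|\<rho>| = d\<^sup>2\<close> this gives the modulus.

  For the argument, lift two points of an R-circle to null vectors \<open>P, Q\<close> and the
  tangents there to \<open>X, Y\<close>. The Gram determinant
  \<open>\<langle>P,Q\<rangle>\<langle>X,Y\<rangle> - \<langle>P,Y\<rangle>\<langle>X,Q\<rangle>\<close> is invariant under \<open>U(2,1)\<close>
  and equals \<open>-\<langle>P,Q\<rangle> = 1 - cos (a - b) \<ge> 0\<close> on the standard R-circle,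
  while in Heisenberg coordinates it is
  \<open>P\<^sub>3\<^sup>2 conj Q\<^sub>3\<^sup>2 \<omega> conj \<omega>' conj \<rho> / 2\<close>
  and \<open>\<langle>P,Q\<rangle> = -P\<^sub>3 conj Q\<^sub>3 \<rho> / 2\<close>, with \<open>\<omega>, \<omega>'\<close> the
  dz-components of the tangents. Hence \<open>\<omega> conj \<omega>' conj \<rho> / \<rho>\<^sup>2 > 0\<close>.
  Applied to \<open>\<Gamma>\<^sub>K(q,p)\<close>, whose tangent at \<open>q\<close> is a positive multiple of
  \<open>\<alpha>'\<close>, this makes \<open>\<Omega>(v, v')\<close> a positive multiple of \<open>\<alpha> conj \<omega>\<close>,
  and \<open>\<alpha>\<close> is a positive multiple of the tangent of \<open>\<Gamma>\<^sub>K(p,q)\<close> at \<open>p\<close>.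
\<close>

lemma rho_eq:
  "rho p q = fst p * cnj (fst p) + fst q * cnj (fst q) - 2 * fst p * cnj (fst q)
     + 4 * \<i> * (of_real (snd p) - of_real (snd q))"
  by (simp add: complex_eq_iff rho_def Aof_def hmult_def hinv_def cmod_power2)
     (simp add: algebra_simps power2_eq_square)

lemma horiz_snd_eq:
  assumes "v \<in> horiz p"
  shows "4 * \<i> * of_real (snd v) = cnj (fst p) * fst v - fst p * cnj (fst v)"
  using assms by (auto simp: horiz_def Xvec_def Yvec_def complex_eq_iff algebra_simps)

lemma horiz_fst_eq_0_iff:
  assumes "v \<in> horiz p"
  shows "fst v = 0 \<longleftrightarrow> v = 0"
  using assms by (auto simp: horiz_def Xvec_def Yvec_def complex_eq_iff prod_eq_iff)

lemma rho_not_nonpos_Reals: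
  assumes "p \<noteq> q"
  shows "rho p q \<notin> \<real>\<^sub>\<le>\<^sub>0"
proof
  assume "rho p q \<in> \<real>\<^sub>\<le>\<^sub>0"
  then have "Im (rho p q) = 0" "Re (rho p q) \<le> 0"
    by (auto simp: complex_nonpos_Reals_iff)
  then have "fst (hmult (hinv p) q) = 0" "snd (hmult (hinv p) q) = 0"
    by (auto simp: rho_def Aof_def)
  with assms show False
    by (cases p, cases q) (auto simp: hmult_def hinv_def)
qed

lemma norm_rho: "cmod (rho p q) = (kor_dist p q)\<^sup>2"
proof -
  obtain z u where zu: "hmult (hinv p) q = (z, u)"
    by fastforce
  have "cmod (rho p q) = sqrt (((cmod z)\<^sup>2)\<^sup>2 + 16 * u\<^sup>2)"
    by (simp add: rho_def zu Aof_def cmod_def power_mult_distrib)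
  also have "\<dots> = (root 4 (((cmod z)\<^sup>2)\<^sup>2 + 16 * u\<^sup>2))\<^sup>2"
    by (simp add: sqrt_def real_root_mult_exp[of 2 2, simplified])
  finally show ?thesis
    by (simp add: kor_dist_def kor_norm_def zu)
qed

lemma rho_translate_horiz:
  assumes "v \<in> horiz p" and "v' \<in> horiz q"
  shows "rho (p + s *\<^sub>R v) (q + t *\<^sub>R v') = rho p q
     + 2 * fst v * (cnj (fst p) - cnj (fst q)) * of_real s
     + 2 * cnj (fst v') * (fst q - fst p) * of_real t
     + (- 2 * fst v * cnj (fst v')) * of_real s * of_real t
     + fst v * cnj (fst v) * (of_real s)\<^sup>2 + fst v' * cnj (fst v') * (of_real t)\<^sup>2"
  using horiz_snd_eq[OF assms(1)] horiz_snd_eq[OF assms(2)]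
  by (simp add: rho_eq scaleR_conv_of_real) algebra

lemma vector_derivative_mixed_Ln_quadratic:
  fixes c00 c10 c01 c11 c20 c02 :: complex
  assumes "c00 \<notin> \<real>\<^sub>\<le>\<^sub>0"
  shows "vector_derivative (\<lambda>s. vector_derivative (\<lambda>t. Ln (c00 + c10 * of_real s + c01 * of_real t
      + c11 * of_real s * of_real t + c20 * (of_real s)\<^sup>2 + c02 * (of_real t)\<^sup>2)) (at 0)) (at 0)
    = (c11 * c00 - c10 * c01) / c00\<^sup>2"
proof -
  define G where "G x y = c00 + c10 * x + c01 * y + c11 * x * y + c20 * x\<^sup>2 + c02 * y\<^sup>2" for x y
  define S where "S = (\<lambda>s. G (of_real s) 0) -` (- \<real>\<^sub>\<le>\<^sub>0)"
  have "open S"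
    unfolding S_def by (rule open_vimage) (auto simp: G_def intro!: continuous_intros)
  have "0 \<in> S"
    using assms by (simp add: S_def G_def)
  have inner: "vector_derivative (\<lambda>t. Ln (G (of_real s) (of_real t))) (at 0)
      = (c01 + c11 * of_real s) / G (of_real s) 0" if "s \<in> S" for s
  proof -
    have "((\<lambda>y. Ln (G (of_real s) y)) has_field_derivative
        (c01 + c11 * of_real s) / G (of_real s) 0) (at (of_real 0))"
      using that unfolding S_def G_def
      by (auto intro!: derivative_eq_intros simp: field_simps)
    then show ?thesis
      by (rule vector_derivative_at[OF has_vector_derivative_real_field])
  qed
  have "((\<lambda>x. (c01 + c11 * x) / G x 0) has_field_derivative (c11 * c00 - c10 * c01) / c00\<^sup>2)
      (at (of_real 0))"
    using assms unfolding G_def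
    by (auto intro!: derivative_eq_intros simp: field_simps power2_eq_square)
  then have "((\<lambda>s. vector_derivative (\<lambda>t. Ln (G (of_real s) (of_real t))) (at 0))
      has_vector_derivative (c11 * c00 - c10 * c01) / c00\<^sup>2) (at 0)"
    by (rule has_vector_derivative_transform_within_open[OF has_vector_derivative_real_field
          \<open>open S\<close> \<open>0 \<in> S\<close>])
       (simp add: inner)
  then show ?thesis
    unfolding G_def by (rule vector_derivative_at)
qed

lemma Omega_horiz_eq:
  assumes "p \<noteq> q" and "v \<in> horiz p" and "v' \<in> horiz q"
  shows "Omega p q v v' = 2 * fst v * cnj (fst v') * cnj (rho p q) / (rho p q)\<^sup>2"
  unfolding Omega_def rho_translate_horiz[OF assms(2,3)]
  by (subst vector_derivative_mixed_Ln_quadratic[OF rho_not_nonpos_Reals[OF assms(1)]])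
     (simp add: rho_eq algebra_simps power2_eq_square)

lemma norm_Omega_horiz:
  assumes "p \<noteq> q" and "v \<in> horiz p" and "v' \<in> horiz q"
  shows "cmod (Omega p q v v') = 2 * (hnorm v * hnorm v') / (kor_dist p q)\<^sup>2"
proof -
  have "rho p q \<noteq> 0"
    using rho_not_nonpos_Reals[OF assms(1)] by auto
  then have "cmod (Omega p q v v') = 2 * (cmod (fst v) * cmod (fst v')) / cmod (rho p q)"
    by (simp add: Omega_horiz_eq[OF assms] norm_mult norm_divide norm_power power2_eq_square)
  then show ?thesis
    by (simp add: norm_rho hnorm_def)
qed

lemma herm_mult_unitary21: "unitary21 N \<Longrightarrow> herm (N *v Z) (N *v W) = herm Z W"
  by (simp add: unitary21_def)

text \<open>\<open>heis_lift p\<close> is the null vector over \<open>p\<close> with last coordinate 1;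
  together with \<open>horiz_lift p\<close> it spans its orthogonal complement
  (see \<open>orthogonal_lift_eq\<close>).\<close>

definition heis_lift :: "heis \<Rightarrow> complex^3" where
  "heis_lift p = vector [- cnj (Aof p) / 2, fst p, 1]"

definition horiz_lift :: "heis \<Rightarrow> complex^3" where
  "horiz_lift p = vector [- cnj (fst p), 1, 0]"

lemma herm_add_left: "herm (X + Y) W = herm X W + herm Y W"
  by (simp add: herm_def algebra_simps)

lemma herm_add_right: "herm W (X + Y) = herm W X + herm W Y"
  by (simp add: herm_def algebra_simps)

lemma herm_scale_left: "herm (a *s X) W = a * herm X W"
  by (simp add: herm_def algebra_simps)

lemma herm_scale_right: "herm W (a *s X) = cnj a * herm W X"
  by (simp add: herm_def algebra_simps)

lemma herm_heis_lift: "herm (heis_lift p) (heis_lift q) = - rho p q / 2"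
  by (simp add: herm_def heis_lift_def rho_eq Aof_def cmod_power2 complex_eq_iff)
     (simp add: field_simps power2_eq_square)

lemma herm_heis_lift_horiz_lift: "herm (heis_lift p) (horiz_lift q) = fst p - fst q"
  by (simp add: herm_def heis_lift_def horiz_lift_def)

lemma herm_horiz_lift_heis_lift: "herm (horiz_lift p) (heis_lift q) = cnj (fst q) - cnj (fst p)"
  by (simp add: herm_def heis_lift_def horiz_lift_def)

lemma herm_horiz_lift: "herm (horiz_lift p) (horiz_lift q) = 1"
  by (simp add: herm_def horiz_lift_def)

lemma herm_lift_gram:
  "herm (a *s heis_lift p) (b *s heis_lift q)
     * herm (a' *s heis_lift p + c *s horiz_lift p) (b' *s heis_lift q + d *s horiz_lift q)
   - herm (a *s heis_lift p) (b' *s heis_lift q + d *s horiz_lift q)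
     * herm (a' *s heis_lift p + c *s horiz_lift p) (b *s heis_lift q)
   = a * cnj b * c * cnj d * cnj (rho p q) / 2"
proof -
  have "cnj (rho p q) = 2 * (fst p - fst q) * (cnj (fst p) - cnj (fst q)) - rho p q"
    by (simp add: rho_eq algebra_simps)
  then show ?thesis
    by (simp add: herm_add_left herm_add_right herm_scale_left herm_scale_right herm_heis_lift
        herm_heis_lift_horiz_lift herm_horiz_lift_heis_lift herm_horiz_lift)
       (simp add: algebra_simps)
qed

lemma null_lift_eq:
  assumes "Z$3 \<noteq> 0" and "herm Z Z = 0"
  shows "Z = Z$3 *s heis_lift (from_lift Z)"
proof -
  define \<zeta> where "\<zeta> = Z$1 / Z$3"
  define z where "z = Z$2 / Z$3"
  have "(\<zeta> + cnj \<zeta> + z * cnj z) * (Z$3 * cnj (Z$3)) = 0"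
    using assms unfolding herm_def \<zeta>_def z_def by (simp add: field_simps)
  then have "\<zeta> + cnj \<zeta> + z * cnj z = 0"
    using assms(1) by simp
  then have "Re \<zeta> = - (cmod z)\<^sup>2 / 2"
    by (simp add: complex_eq_iff cmod_power2) (simp add: field_simps power2_eq_square)
  then have "\<zeta> = - cnj (Aof (from_lift Z)) / 2"
    by (simp add: complex_eq_iff Aof_def from_lift_def \<zeta>_def z_def)
  then show ?thesis
    using assms(1) by (simp add: vec_eq_iff forall_3 heis_lift_def from_lift_def \<zeta>_def)
qed

lemma orthogonal_lift_eq:
  assumes "Z$3 \<noteq> 0" and "herm Z Z = 0" and "herm X Z = 0"
  shows "X = X$3 *s heis_lift (from_lift Z)
    + (X$2 - fst (from_lift Z) * X$3) *s horiz_lift (from_lift Z)"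
proof -
  define w where "w = from_lift Z"
  have "cnj (Z$3) * herm X (heis_lift w) = 0"
    using assms(3) null_lift_eq[OF assms(1,2)] by (metis herm_scale_right w_def)
  then have "herm X (heis_lift w) = 0"
    using assms(1) by simp
  moreover have "Aof w + cnj (Aof w) = 2 * fst w * cnj (fst w)"
    by (simp add: Aof_def complex_eq_iff cmod_power2) (simp add: power2_eq_square)
  ultimately show ?thesis
    unfolding w_def[symmetric]
    by (simp add: vec_eq_iff forall_3 herm_def heis_lift_def horiz_lift_def) algebra
qed

definition stdc_tangent :: "real \<Rightarrow> complex^3" where
  "stdc_tangent t = vector [complex_of_real (- sin t / 2), complex_of_real (cos t),
                            complex_of_real (- sin t)]"

lemma has_vector_derivative_stdc_nth:
  fixes M :: "complex^3^3"
  shows "((\<lambda>t. (M *v stdc t) $ i) has_vector_derivative (M *v stdc_tangent t) $ i) (at t)"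
proof -
  have nth_mult: "(M *v x) $ i = M$i$1 * x$1 + M$i$2 * x$2 + M$i$3 * x$3" for x :: "complex^3"
    by (simp add: matrix_vector_mult_def sum_3)
  show ?thesis
    unfolding nth_mult stdc_def stdc_tangent_def vector_3
    by (auto intro!: derivative_eq_intros)
qed

lemma herm_stdc: "herm (stdc a) (stdc b) = of_real (cos (a - b) - 1)"
  by (simp add: herm_def stdc_def cos_diff complex_eq_iff; simp add: field_simps)

lemma herm_stdc_stdc_tangent: "herm (stdc a) (stdc_tangent b) = of_real (sin (a - b))"
  by (simp add: herm_def stdc_def stdc_tangent_def sin_diff complex_eq_iff; simp add: field_simps)

lemma herm_stdc_tangent_stdc: "herm (stdc_tangent a) (stdc b) = - of_real (sin (a - b))"
  by (simp add: herm_def stdc_def stdc_tangent_def sin_diff complex_eq_iff; simp add: field_simps)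

lemma herm_stdc_tangent: "herm (stdc_tangent a) (stdc_tangent b) = of_real (cos (a - b))"
  by (simp add: herm_def stdc_tangent_def cos_diff complex_eq_iff; simp add: field_simps)

lemma rcirc_herm_gram:
  assumes "unitary21 N"
  shows "herm (N *v stdc a) (N *v stdc b) * herm (N *v stdc_tangent a) (N *v stdc_tangent b)
       - herm (N *v stdc a) (N *v stdc_tangent b) * herm (N *v stdc_tangent a) (N *v stdc b)
       = - herm (N *v stdc a) (N *v stdc b)"
proof -
  have "(cos (a - b) - 1) * cos (a - b) + sin (a - b) * sin (a - b) = - (cos (a - b) - 1)"
    using sin_cos_squared_add[of "a - b"] by algebra
  with assms show ?thesis
    by (simp add: herm_mult_unitary21 herm_stdc herm_stdc_stdc_tangent herm_stdc_tangent_stdc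
        herm_stdc_tangent flip: of_real_mult of_real_diff of_real_add)
qed

lemma fst_rcirc_derivative:
  assumes "finite_at N t" and "(rcirc N has_vector_derivative w) (at t)"
  shows "(N *v stdc t)$3 * fst w
    = (N *v stdc_tangent t)$2 - fst (rcirc N t) * (N *v stdc_tangent t)$3"
proof -
  define P where "P i t = (N *v stdc t) $ i" for i t
  define X where "X i = (N *v stdc_tangent t) $ i" for i
  have "P 3 t \<noteq> 0"
    using assms(1) by (simp add: finite_at_def P_def)
  have "((\<lambda>t. P 2 t / P 3 t) has_derivative
      (\<lambda>h. (h *\<^sub>R X 2 * P 3 t - P 2 t * h *\<^sub>R X 3) / (P 3 t * P 3 t))) (at t)"
    using has_derivative_divide'[OF
        has_vector_derivative_stdc_nth[of N 2 t, unfolded has_vector_derivative_def]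
        has_vector_derivative_stdc_nth[of N 3 t, unfolded has_vector_derivative_def]
        \<open>P 3 t \<noteq> 0\<close>[unfolded P_def]]
    by (simp add: P_def X_def)
  then have "((\<lambda>t. fst (rcirc N t)) has_vector_derivative
      (X 2 * P 3 t - P 2 t * X 3) / (P 3 t * P 3 t)) (at t)"
    unfolding has_vector_derivative_def rcirc_def from_lift_def P_def
    by (simp add: scaleR_conv_of_real field_simps)
  moreover have "((\<lambda>t. fst (rcirc N t)) has_vector_derivative fst w) (at t)"
    using bounded_linear.has_vector_derivative[OF bounded_linear_fst assms(2)] by simp
  ultimately have "fst w = (X 2 * P 3 t - P 2 t * X 3) / (P 3 t * P 3 t)"
    using vector_derivative_unique_at by blast
  with \<open>P 3 t \<noteq> 0\<close> show ?thesis
    by (simp add: P_def X_def rcirc_def from_lift_def field_simps)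
qed

lemma rcirc_lift_eq:
  assumes N: "unitary21 N" and "finite_at N t" and w: "(rcirc N has_vector_derivative w) (at t)"
  shows "N *v stdc t = (N *v stdc t)$3 *s heis_lift (rcirc N t)"
    and "N *v stdc_tangent t = (N *v stdc_tangent t)$3 *s heis_lift (rcirc N t)
           + ((N *v stdc t)$3 * fst w) *s horiz_lift (rcirc N t)"
proof -
  have "(N *v stdc t)$3 \<noteq> 0"
    using assms(2) by (simp add: finite_at_def)
  moreover have null: "herm (N *v stdc t) (N *v stdc t) = 0"
    by (simp add: herm_mult_unitary21[OF N] herm_stdc)
  ultimately show "N *v stdc t = (N *v stdc t)$3 *s heis_lift (rcirc N t)"
    unfolding rcirc_def by (rule null_lift_eq)
  have "herm (N *v stdc_tangent t) (N *v stdc t) = 0"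
    by (simp add: herm_mult_unitary21[OF N] herm_stdc_tangent_stdc)
  with \<open>(N *v stdc t)$3 \<noteq> 0\<close> null
  show "N *v stdc_tangent t = (N *v stdc_tangent t)$3 *s heis_lift (rcirc N t)
           + ((N *v stdc t)$3 * fst w) *s horiz_lift (rcirc N t)"
    unfolding fst_rcirc_derivative[OF assms(2) w] rcirc_def by (rule orthogonal_lift_eq)
qed

lemma rcirc_tangents_rho:
  assumes N: "unitary21 N" and "finite_at N a" and "finite_at N b"
    and pq: "rcirc N a \<noteq> rcirc N b"
    and w: "(rcirc N has_vector_derivative w) (at a)"
    and w': "(rcirc N has_vector_derivative w') (at b)"
  obtains r where "r > 0"
    and "fst w * cnj (fst w') * cnj (rho (rcirc N a) (rcirc N b)) / (rho (rcirc N a) (rcirc N b))\<^sup>2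
      = of_real r"
proof -
  define p q where "p = rcirc N a" and "q = rcirc N b"
  define P Q where "P = N *v stdc a" and "Q = N *v stdc b"
  define X Y where "X = N *v stdc_tangent a" and "Y = N *v stdc_tangent b"
  define cP cQ where "cP = P$3" and "cQ = Q$3"
  define cX cY where "cX = X$3" and "cY = Y$3"
  have "cP \<noteq> 0" "cQ \<noteq> 0"
    using assms(2,3) by (simp_all add: finite_at_def cP_def cQ_def P_def Q_def)
  note lift_a = rcirc_lift_eq[OF N assms(2) w, folded P_def X_def p_def, folded cP_def cX_def]
  note lift_b = rcirc_lift_eq[OF N assms(3) w', folded Q_def Y_def q_def, folded cQ_def cY_def]
  define R where "R = cos (a - b) - 1"
  have "- of_real R = herm P Q * herm X Y - herm P Y * herm X Q"
    using rcirc_herm_gram[OF N, of a b]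
    by (simp add: P_def Q_def X_def Y_def herm_mult_unitary21[OF N] herm_stdc R_def)
  also have "\<dots> = cP * cnj cQ * (cP * fst w) * cnj (cQ * fst w') * cnj (rho p q) / 2"
    unfolding lift_a lift_b by (rule herm_lift_gram)
  finally have gram:
    "- of_real R = cP * cnj cQ * (cP * fst w) * cnj (cQ * fst w') * cnj (rho p q) / 2" .
  have "of_real R = herm P Q"
    by (simp add: P_def Q_def herm_mult_unitary21[OF N] herm_stdc R_def)
  also have "\<dots> = - cP * cnj cQ * rho p q / 2"
    by (simp add: lift_a(1) lift_b(1) herm_scale_left herm_scale_right herm_heis_lift)
  finally have hPQ: "of_real R = - cP * cnj cQ * rho p q / 2" .
  have "rho p q \<noteq> 0"
    using rho_not_nonpos_Reals[OF pq] by (auto simp: p_def q_def)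
  with hPQ \<open>cP \<noteq> 0\<close> \<open>cQ \<noteq> 0\<close> have "R \<noteq> 0"
    by auto
  moreover have "R \<le> 0"
    by (simp add: R_def)
  ultimately have "R < 0"
    by simp
  have "fst w * cnj (fst w') * cnj (rho p q) / (rho p q)\<^sup>2 = of_real (- 1 / (2 * R))"
    using gram hPQ \<open>cP \<noteq> 0\<close> \<open>cQ \<noteq> 0\<close> \<open>R \<noteq> 0\<close> \<open>rho p q \<noteq> 0\<close>
    by (simp add: field_simps power2_eq_square)
  with \<open>R < 0\<close> show ?thesis
    by (intro that[of "- 1 / (2 * R)"]) (simp_all add: p_def q_def divide_pos_neg)
qed

lemma hangle_eq_abs_Arg:
  assumes "fst v \<noteq> 0" and "fst w \<noteq> 0"
  shows "hangle v w = \<bar>Arg (fst v * cnj (fst w))\<bar>"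
proof -
  define x where "x = fst v * cnj (fst w)"
  have "x \<noteq> 0"
    using assms by (simp add: x_def)
  have "hinner v w / (hnorm v * hnorm w) = Re x / cmod x"
    by (simp add: hinner_def hnorm_def x_def norm_mult)
  also have "\<dots> = cos \<bar>Arg x\<bar>"
    using \<open>x \<noteq> 0\<close>
    by (metis Re_rcis rcis_cmod_Arg cos_abs_real nonzero_mult_div_cancel_left norm_eq_zero)
  finally have "hangle v w = arccos (cos \<bar>Arg x\<bar>)"
    by (simp only: hangle_def)
  also have "\<dots> = \<bar>Arg x\<bar>"
    using Arg_bounded[of x] by (intro arccos_cos) auto
  finally show ?thesis
    by (simp only: x_def)
qed

lemma abs_Arg_Omega_eq_hangle:
  assumes "p \<noteq> q" and "v \<in> horiz p" and "v' \<in> horiz q" and "v \<noteq> 0"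
    and "c > 0" and "w0 = c *\<^sub>R v" and "c' > 0" and "w1 = c' *\<^sub>R v'"
    and "r > 0" and r: "fst w * cnj (fst w1) * cnj (rho p q) / (rho p q)\<^sup>2 = of_real r"
  shows "\<bar>Arg (Omega p q v v')\<bar> = hangle w0 w"
proof -
  define \<omega> where "\<omega> = fst w"
  have "fst v \<noteq> 0"
    using assms(2,4) horiz_fst_eq_0_iff by blast
  have "Omega p q v v' * (of_real c' * \<omega>)
      = 2 * fst v * (\<omega> * cnj (fst w1) * cnj (rho p q) / (rho p q)\<^sup>2)"
    by (simp add: Omega_horiz_eq[OF assms(1-3)] assms(8) scaleR_conv_of_real)
  also have "\<dots> = 2 * fst v * of_real r"
    by (simp add: r \<omega>_def)
  finally have scaled: "Omega p q v v' * (of_real c' * \<omega>) = 2 * fst v * of_real r" .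
  with \<open>r > 0\<close> \<open>fst v \<noteq> 0\<close> have "\<omega> \<noteq> 0"
    by auto
  have Omega_eq:
    "Omega p q v v' = of_real (2 * r / (c * c' * (cmod \<omega>)\<^sup>2)) * (fst w0 * cnj \<omega>)"
    using scaled \<open>\<omega> \<noteq> 0\<close> assms(5,7) complex_norm_square[of \<omega>]
    by (simp add: assms(6) scaleR_conv_of_real field_simps)
  have "2 * r / (c * c' * (cmod \<omega>)\<^sup>2) > 0"
    using assms(5,7,9) \<open>\<omega> \<noteq> 0\<close> by simp
  then have "Arg (Omega p q v v') = Arg (fst w0 * cnj \<omega>)"
    unfolding Omega_eq by (rule Arg_times_of_real)
  moreover have "fst w0 \<noteq> 0"
    using assms(5,6) \<open>fst v \<noteq> 0\<close> by simp
  ultimately show ?thesis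
    using hangle_eq_abs_Arg[of w0 w] \<open>\<omega> \<noteq> 0\<close> by (simp add: \<omega>_def)
qed

theorem proposition6p2:
  fixes p q v v' :: heis
  assumes "p \<noteq> q" and "v \<in> horiz p" and "v' \<in> horiz q"
  shows "cmod (Omega p q v v') = 2 * (hnorm v * hnorm v') / (kor_dist p q)\<^sup>2 \<and>
    (\<forall>\<kappa> L s s' a b M t0 t1 w0 N t2 t3 w1 w.
           legendrian_knot \<kappa> L \<and> \<kappa> s = p \<and> \<kappa> s' = q \<and>
           a > 0 \<and> b > 0 \<and>
           v = a *\<^sub>R vector_derivative \<kappa> (at s) \<and> v' = b *\<^sub>R vector_derivative \<kappa> (at s') \<and>
           is_Gamma \<kappa> s q M t0 t1 w0 \<and>
           is_Gamma \<kappa> s' p N t2 t3 w1 \<and> (rcirc N has_vector_derivative w) (at t3)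
           \<longrightarrow> \<bar>Arg (Omega p q v v')\<bar> = hangle w0 w)"
proof (intro conjI norm_Omega_horiz[OF assms] allI impI, elim conjE)
  fix \<kappa> L s s' a b M t0 t1 w0 N t2 t3 w1 w
  assume "legendrian_knot \<kappa> L" "\<kappa> s = p" "\<kappa> s' = q" "a > 0" "b > 0"
    and v: "v = a *\<^sub>R vector_derivative \<kappa> (at s)"
    and v': "v' = b *\<^sub>R vector_derivative \<kappa> (at s')"
    and "is_Gamma \<kappa> s q M t0 t1 w0" and "is_Gamma \<kappa> s' p N t2 t3 w1"
    and w: "(rcirc N has_vector_derivative w) (at t3)"
  then obtain c c1 where "c > 0" "w0 = (c / a) *\<^sub>R v" "c1 > 0" "w1 = (c1 / b) *\<^sub>R v'"
    and N: "unitary21 N" "finite_at N t3" "finite_at N t2" "rcirc N t3 = p" "rcirc N t2 = q"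
    and w1: "(rcirc N has_vector_derivative w1) (at t2)"
    unfolding is_Gamma_def by auto
  obtain r where "r > 0" "fst w * cnj (fst w1) * cnj (rho p q) / (rho p q)\<^sup>2 = of_real r"
    using rcirc_tangents_rho[OF N(1-3) _ w w1] N(4,5) assms(1) by metis
  moreover have "v \<noteq> 0"
    using \<open>legendrian_knot \<kappa> L\<close> \<open>a > 0\<close> by (simp add: v legendrian_knot_def)
  ultimately show "\<bar>Arg (Omega p q v v')\<bar> = hangle w0 w"
    using \<open>c > 0\<close> \<open>c1 > 0\<close> \<open>a > 0\<close> \<open>b > 0\<close>
    by (intro abs_Arg_Omega_eq_hangle[OF assms _ _ \<open>w0 = (c / a) *\<^sub>R v\<close> _
          \<open>w1 = (c1 / b) *\<^sub>R v'\<close>]) auto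
qed

end
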